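(* Let $n\ge1$ and $|\psi\rangle=\sum_{k=0}^n d_k|D^n_k\rangle$ with $d_k\in\mathbb{C}$ and $d_0\neq0$. For $y\in\mathbb{C}$ and $x_1,\dots,x_n\in\mathbb{C}$ let $A_0=y\,\mathbb{1}_n$ and $A_1=\mathrm{diag}(x_1,\dots,x_n)$. Then $|\psi\rangle=\sum_{(i_1,\dots,i_n)\in\{0,1\}^n}\mathrm{Tr}[A_{i_1}\cdots A_{i_n}]\,|i_1\cdots i_n\rangle$ if and only if $y^n=d_0/n$ and $x_1^k+\cdots+x_n^k=\dfrac{d_k}{y^{n-k}\sqrt{\binom nk}}$ for all $k=1,\dots,n$ (in particular $x_1^n+\cdots+x_n^n=d_n$). Consequently, for any $y$ with $y^n=d_0/n$, the corresponding $x_1,\dots,x_n$ are exactly (up to permutation) the roots, with multiplicity, of $P(X)=\sum_{m=0}^n\frac{n!}{m!}Q_m(\boldsymbol z)X^{n-m}$ with $z_k=\dfrac{d_k}{y^{n-k}\sqrt{\binom nk}}$.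
   Context: $|D^n_k\rangle=\binom nk^{-1/2}\sum_{\vec i\in\{0,1\}^n,\ \sum_j i_j=k}|\vec i\rangle$ is the normalized $n$-qubit Dicke state with $k$ excitations, and $|i_1\cdots i_n\rangle$ is the computational basis. For $m\ge1$, a partition $\boldsymbol\lambda\vdash m$ is written $(\lambda_1^{\mu_1},\dots,\lambda_k^{\mu_k})$ with distinct parts $\lambda_1>\cdots>\lambda_k\ge1$ of multiplicities $\mu_i\ge1$, $\sum\mu_i\lambda_i=m$; $Q_m(\boldsymbol z)=\sum_{\boldsymbol\lambda\vdash m}\xi_{\boldsymbol\lambda}\prod_{i=1}^kz_{\lambda_i}^{\mu_i}$ with $\xi_{\boldsymbol\lambda}=m!\prod_{i=1}^k\frac{(-1)^{\mu_i}}{\mu_i!\lambda_i^{\mu_i}}$, and $Q_0:=1$. *)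

theory Defs
  imports "HOL-Computational_Algebra.Polynomial" "HOL-Library.Multiset" "Jordan_Normal_Form.Matrix"
begin

text \<open>Computational basis vectors |i_1...i_n> of n qubits are lists of length n over {0,1};
  a state is its amplitude function on these lists.\<close>

definition basis_strings :: "nat \<Rightarrow> nat list set" where
  "basis_strings n = {is. length is = n \<and> set is \<subseteq> {0,1}}"

definition dicke :: "nat \<Rightarrow> nat \<Rightarrow> nat list \<Rightarrow> complex" where
  "dicke n k is = (if sum_list is = k then complex_of_real (1 / sqrt (real (n choose k))) else 0)"

definition dicke_sup :: "nat \<Rightarrow> (nat \<Rightarrow> complex) \<Rightarrow> nat list \<Rightarrow> complex" where
  "dicke_sup n d is = (\<Sum>k=0..n. d k * dicke n k is)"

definition mat_trace :: "'a::comm_ring_1 mat \<Rightarrow> 'a" where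
  "mat_trace A = (\<Sum>i<dim_row A. A $$ (i,i))"

text \<open>A_0 = y 1_n, A_1 = diag(x_1,...,x_n) (matrix indices are 0-based, so entry (i,i) is x (i+1)).\<close>
definition A0 :: "nat \<Rightarrow> complex \<Rightarrow> complex mat" where
  "A0 n y = y \<cdot>\<^sub>m 1\<^sub>m n"

definition A1 :: "nat \<Rightarrow> (nat \<Rightarrow> complex) \<Rightarrow> complex mat" where
  "A1 n x = mat n n (\<lambda>(i,j). if i = j then x (Suc i) else 0)"

definition A_of :: "nat \<Rightarrow> complex \<Rightarrow> (nat \<Rightarrow> complex) \<Rightarrow> nat \<Rightarrow> complex mat" where
  "A_of n y x b = (if b = 0 then A0 n y else A1 n x)"

definition mps_amp :: "nat \<Rightarrow> complex \<Rightarrow> (nat \<Rightarrow> complex) \<Rightarrow> nat list \<Rightarrow> complex" where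
  "mps_amp n y x is = mat_trace (foldr (\<lambda>b M. A_of n y x b * M) is (1\<^sub>m n))"

definition partitions :: "nat \<Rightarrow> nat multiset set" where
  "partitions m = {lam. (\<forall>p\<in>#lam. p \<ge> 1) \<and> sum_mset lam = m}"

definition xi :: "nat \<Rightarrow> nat multiset \<Rightarrow> complex" where
  "xi m lam = fact m * (\<Prod>p\<in>set_mset lam.
      (-1) ^ count lam p / (fact (count lam p) * of_nat p ^ count lam p))"

definition Q :: "nat \<Rightarrow> (nat \<Rightarrow> complex) \<Rightarrow> complex" where
  "Q m z = (if m = 0 then 1 else
      (\<Sum>lam\<in>partitions m. xi m lam * (\<Prod>p\<in>set_mset lam. z p ^ count lam p)))"

definition Ppoly :: "nat \<Rightarrow> (nat \<Rightarrow> complex) \<Rightarrow> complex poly" where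
  "Ppoly n z = (\<Sum>m=0..n. monom (fact n / fact m * Q m z) (n - m))"

end

theory Submission
  imports Defs "HOL-Computational_Algebra.Polynomial_FPS"
    "HOL-Computational_Algebra.Fundamental_Theorem_Algebra"
begin

(* All A_i are diagonal, so Tr[A_i1 ... A_in] = y^(n-k) p_k with k = i1 + ... + in and
   p_k = x_1^k + ... + x_n^k, while the Dicke amplitude at that string is d_k / sqrt (n choose k).
   The string with k = 0 forces y^n = d_0 / n, hence y <> 0, and the other strings then say
   exactly p_k = z_k.

   By the exponential formula the partition sums Q_m(z) / m! are the coefficients
   of F = exp (- sum_k z_k X^k / k), so X F' = - (sum_k z_k X^k) F, while G = prod_l (1 - x_l X)
   satisfies X G' = - (sum_k p_k X^k) G.  Such an equation expresses each coefficient of the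
   series through the lower ones and the coefficients of the logarithmic derivative, and vice
   versa; hence p_k = z_k for k <= n iff F and G agree up to X^n, i.e. iff
   P = n! prod_l (X - x_l), whose roots are the x_l. *)

lemma A0_mat_diag: "A0 n y = mat_diag n (\<lambda>_. y)"
  by (auto simp: A0_def mat_diag_def)

lemma A1_mat_diag: "A1 n x = mat_diag n (\<lambda>i. x (Suc i))"
  by (auto simp: A1_def mat_diag_def)

lemma mat_trace_mat_diag: "mat_trace (mat_diag n f) = (\<Sum>i<n. f i)"
  by (simp add: mat_trace_def mat_diag_def)

lemma binary_sum_list_le_length: "set is \<subseteq> {0,1} \<Longrightarrow> sum_list is \<le> length (is :: nat list)"
  by (induction "is") auto

lemma mps_product_mat_diag:
  assumes "set is \<subseteq> {0,1}"
  shows "foldr (\<lambda>b M. A_of n y x b * M) is (1\<^sub>m n) =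
         mat_diag n (\<lambda>i. y ^ (length is - sum_list is) * x (Suc i) ^ sum_list is)"
  using assms
proof (induction "is")
  case Nil
  then show ?case by simp
next
  case (Cons b "is")
  then have "sum_list is \<le> length is" by (simp add: binary_sum_list_le_length)
  with Cons show ?case
    by (auto simp: A_of_def A0_mat_diag A1_mat_diag Suc_diff_le mult_ac)
qed

lemma mps_amp_basis_string:
  assumes "is \<in> basis_strings n"
  shows "mps_amp n y x is = y ^ (n - sum_list is) * (\<Sum>l=1..n. x l ^ sum_list is)"
  using assms
  by (simp add: basis_strings_def mps_amp_def mps_product_mat_diag mat_trace_mat_diag
      sum_distrib_left sum.atLeast1_atMost_eq)

lemma dicke_sup_basis_string:
  assumes "is \<in> basis_strings n"
  shows "dicke_sup n d is = d (sum_list is) * complex_of_real (1 / sqrt (real (n choose sum_list is)))"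
proof -
  have "sum_list is \<le> n"
    using assms binary_sum_list_le_length by (auto simp: basis_strings_def)
  then show ?thesis
    by (simp add: dicke_sup_def dicke_def if_distrib[of "(*) _"] sum.delta cong: if_cong)
qed

lemma sum_list_basis_strings: "sum_list ` basis_strings n = {..n}"
proof
  show "sum_list ` basis_strings n \<subseteq> {..n}"
    using binary_sum_list_le_length by (auto simp: basis_strings_def)
  show "{..n} \<subseteq> sum_list ` basis_strings n"
  proof
    fix k assume "k \<in> {..n}"
    then have "replicate k 1 @ replicate (n - k) 0 \<in> basis_strings n"
      by (auto simp: basis_strings_def)
    moreover have "sum_list (replicate k 1 @ replicate (n - k) (0::nat)) = k"
      by (simp add: sum_list_replicate)
    ultimately show "k \<in> sum_list ` basis_strings n"
      by (metis image_eqI)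
  qed
qed

lemma amplitudes_match_iff:
  "(\<forall>is\<in>basis_strings n. dicke_sup n d is = mps_amp n y x is) \<longleftrightarrow>
   (\<forall>k\<le>n. d k * complex_of_real (1 / sqrt (real (n choose k))) = y ^ (n - k) * (\<Sum>l=1..n. x l ^ k))"
proof -
  have "(\<forall>is\<in>basis_strings n. dicke_sup n d is = mps_amp n y x is) \<longleftrightarrow>
        (\<forall>k\<in>sum_list ` basis_strings n.
           d k * complex_of_real (1 / sqrt (real (n choose k))) = y ^ (n - k) * (\<Sum>l=1..n. x l ^ k))"
    by (simp add: dicke_sup_basis_string mps_amp_basis_string)
  then show ?thesis
    by (auto simp: sum_list_basis_strings)
qed

lemma dicke_amplitude_eq_iff:
  fixes y p :: complex
  assumes "y \<noteq> 0" and "k \<le> n"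
  shows "d k * complex_of_real (1 / sqrt (real (n choose k))) = y ^ (n - k) * p \<longleftrightarrow>
         p = d k / (y ^ (n - k) * complex_of_real (sqrt (real (n choose k))))"
proof -
  have "complex_of_real (sqrt (real (n choose k))) \<noteq> 0"
    using assms(2) by simp
  with assms(1) show ?thesis
    by (simp add: divide_simps mult_ac eq_commute[of "d k"])
qed

lemma amplitudes_match_iff_power_sums:
  assumes "n \<ge> 1" and "d 0 \<noteq> 0"
  shows "(\<forall>is\<in>basis_strings n. dicke_sup n d is = mps_amp n y x is) \<longleftrightarrow>
         (y ^ n = d 0 / of_nat n \<and>
          (\<forall>k\<in>{1..n}. (\<Sum>l=1..n. x l ^ k) =
             d k / (y ^ (n - k) * complex_of_real (sqrt (real (n choose k))))))"
    (is "_ \<longleftrightarrow> ?y \<and> (\<forall>k\<in>{1..n}. ?power_sum k)")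
proof -
  let ?amplitude = "\<lambda>k. d k * complex_of_real (1 / sqrt (real (n choose k))) =
                        y ^ (n - k) * (\<Sum>l=1..n. x l ^ k)"
  have amplitude_0: "?amplitude 0 \<longleftrightarrow> ?y"
    using assms(1) by (auto simp: field_simps)
  have amplitude_k: "?amplitude k \<longleftrightarrow> ?power_sum k" if ?y and "k \<le> n" for k
  proof -
    have "y ^ n \<noteq> 0"
      using that(1) assms by simp
    with assms(1) have "y \<noteq> 0"
      by auto
    then show ?thesis
      using that(2) by (rule dicke_amplitude_eq_iff)
  qed
  show ?thesis
    unfolding amplitudes_match_iff
  proof (intro iffI conjI ballI allI impI)
    assume "\<forall>k\<le>n. ?amplitude k"
    with amplitude_0 show ?y
      by blast
  next
    fix k assume amplitudes: "\<forall>k\<le>n. ?amplitude k" and "k \<in> {1..n}"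
    then have ?y and "k \<le> n"
      using amplitude_0 by auto
    with amplitudes amplitude_k show "?power_sum k"
      by blast
  next
    fix k assume power_sums: "?y \<and> (\<forall>k\<in>{1..n}. ?power_sum k)" and "k \<le> n"
    show "?amplitude k"
    proof (cases "k = 0")
      case True
      with power_sums amplitude_0 show ?thesis
        by blast
    next
      case False
      with \<open>k \<le> n\<close> power_sums amplitude_k[of k] show ?thesis
        by simp
    qed
  qed
qed

definition bounded_partitions :: "nat \<Rightarrow> nat \<Rightarrow> nat multiset set" where
  "bounded_partitions j m = {lam. set_mset lam \<subseteq> {1..j} \<and> sum_mset lam = m}"

(* (- z_p / p)^c / c! is the coefficient of X^(p c) in exp (- z_p X^p / p), so partition_sum z j
   is the coefficient sequence of exp (- sum_(p <= j) z_p X^p / p). *)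
definition partition_weight :: "(nat \<Rightarrow> 'a::field_char_0) \<Rightarrow> nat multiset \<Rightarrow> 'a" where
  "partition_weight z lam =
     (\<Prod>p\<in>set_mset lam. (- z p / of_nat p) ^ count lam p / fact (count lam p))"

definition partition_sum :: "(nat \<Rightarrow> 'a::field_char_0) \<Rightarrow> nat \<Rightarrow> nat \<Rightarrow> 'a" where
  "partition_sum z j m = (\<Sum>lam\<in>bounded_partitions j m. partition_weight z lam)"

lemma member_le_sum_mset: "(p::nat) \<in># lam \<Longrightarrow> p \<le> sum_mset lam"
  by (induction lam) auto

lemma size_le_sum_mset: "0 \<notin># lam \<Longrightarrow> size lam \<le> sum_mset (lam::nat multiset)"
  by (induction lam) auto

lemma sum_mset_split_count:
  "sum_mset (lam::nat multiset) = p * count lam p + sum_mset {#q \<in># lam. q \<noteq> p#}"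
proof -
  have "sum_mset lam = sum_mset ({#q \<in># lam. q = p#} + {#q \<in># lam. q \<noteq> p#})"
    using multiset_partition[of lam "\<lambda>q. q = p"] by simp
  then show ?thesis
    by (simp add: filter_eq_replicate_mset mult.commute)
qed

lemma finite_bounded_partitions: "finite (bounded_partitions j m)"
proof (rule finite_subset)
  show "bounded_partitions j m \<subseteq> (\<Union>s\<le>m. multisets_of_size {1..j} s)"
  proof
    fix lam assume "lam \<in> bounded_partitions j m"
    then have lam: "set_mset lam \<subseteq> {1..j}" "sum_mset lam = m"
      by (auto simp: bounded_partitions_def)
    then have "0 \<notin># lam"
      by auto
    with lam have "size lam \<le> m"
      using size_le_sum_mset by fastforce
    with lam show "lam \<in> (\<Union>s\<le>m. multisets_of_size {1..j} s)"
      by (auto simp: multisets_of_size_def)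
  qed
qed auto

lemma bounded_partitions_eq_partitions:
  assumes "m \<le> j"
  shows "bounded_partitions j m = partitions m"
  unfolding bounded_partitions_def partitions_def
  using assms by (auto simp: subset_iff dest: member_le_sum_mset)

lemma partition_sum_at_0: "partition_sum z j 0 = 1"
proof -
  have "lam = {#}" if "set_mset lam \<subseteq> {1..j}" and "sum_mset lam = 0" for lam
  proof -
    have "set_mset lam = {}"
      using that by fastforce
    then show ?thesis
      by simp
  qed
  then have "bounded_partitions j 0 = {{#}}"
    by (auto simp: bounded_partitions_def)
  then show ?thesis
    by (simp add: partition_sum_def partition_weight_def)
qed

lemma partition_weight_add_replicate:
  assumes "p \<notin># lam"
  shows "partition_weight z (replicate_mset u p + lam) =
         (- z p / of_nat p) ^ u / fact u * partition_weight z lam"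
proof (cases "u = 0")
  case False
  let ?lam' = "replicate_mset u p + lam"
  have count_p: "count ?lam' p = u"
    using assms by (simp add: not_in_iff)
  have "partition_weight z ?lam' =
        (- z p / of_nat p) ^ u / fact u *
        (\<Prod>q\<in>set_mset lam. (- z q / of_nat q) ^ count ?lam' q / fact (count ?lam' q))"
    using False assms by (simp add: partition_weight_def not_in_iff)
  also have "(\<Prod>q\<in>set_mset lam. (- z q / of_nat q) ^ count ?lam' q / fact (count ?lam' q)) =
             partition_weight z lam"
    unfolding partition_weight_def using assms by (intro prod.cong) auto
  finally show ?thesis .
qed (simp add: partition_weight_def)

lemma add_replicate_mset_bounded_partitions:
  assumes "rest \<in> bounded_partitions j m"
  shows "replicate_mset u (Suc j) + rest \<in> bounded_partitions (Suc j) (Suc j * u + m)"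
    and "count (replicate_mset u (Suc j) + rest) (Suc j) = u"
proof -
  have rest: "set_mset rest \<subseteq> {1..j}" "sum_mset rest = m"
    using assms by (auto simp: bounded_partitions_def)
  then have "sum_mset (replicate_mset u (Suc j) + rest) = Suc j * u + m"
    by (simp only: sum_mset.union sum_mset_replicate_mset of_nat_id mult.commute)
  with rest(1) show "replicate_mset u (Suc j) + rest \<in> bounded_partitions (Suc j) (Suc j * u + m)"
    by (auto simp: bounded_partitions_def)
  from rest(1) have "Suc j \<notin># rest"
    by auto
  then show "count (replicate_mset u (Suc j) + rest) (Suc j) = u"
    by (simp add: not_in_iff)
qed

lemma bounded_partitions_Suc_count_slice:
  assumes "i \<le> m" and "Suc j dvd i"
  shows "{lam \<in> bounded_partitions (Suc j) m. Suc j * count lam (Suc j) = i} =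
         (\<lambda>lam. replicate_mset (i div Suc j) (Suc j) + lam) ` bounded_partitions j (m - i)"
proof (intro equalityI subsetI)
  fix lam assume "lam \<in> {lam \<in> bounded_partitions (Suc j) m. Suc j * count lam (Suc j) = i}"
  then have lam: "lam \<in> bounded_partitions (Suc j) m" and i: "Suc j * count lam (Suc j) = i"
    by auto
  let ?rest = "{#q \<in># lam. q \<noteq> Suc j#}"
  have "i div Suc j = count lam (Suc j)"
    unfolding i[symmetric] by (rule nonzero_mult_div_cancel_left) simp
  then have "{#q \<in># lam. q = Suc j#} = replicate_mset (i div Suc j) (Suc j)"
    by (simp add: filter_eq_replicate_mset)
  then have "lam = replicate_mset (i div Suc j) (Suc j) + ?rest"
    using multiset_partition[of lam "\<lambda>q. q = Suc j"] by simp
  moreover have "?rest \<in> bounded_partitions j (m - i)"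
    using lam i sum_mset_split_count[of lam "Suc j"] by (auto simp: bounded_partitions_def)
  ultimately show "lam \<in> (\<lambda>lam. replicate_mset (i div Suc j) (Suc j) + lam) ` bounded_partitions j (m - i)"
    by (rule image_eqI)
next
  fix lam assume "lam \<in> (\<lambda>lam. replicate_mset (i div Suc j) (Suc j) + lam) ` bounded_partitions j (m - i)"
  then obtain rest where lam: "lam = replicate_mset (i div Suc j) (Suc j) + rest"
    and rest: "rest \<in> bounded_partitions j (m - i)"
    by blast
  have i: "Suc j * (i div Suc j) = i"
    using assms(2) by (rule dvd_mult_div_cancel)
  with assms(1) have "Suc j * (i div Suc j) + (m - i) = m"
    by simp
  with i show "lam \<in> {lam \<in> bounded_partitions (Suc j) m. Suc j * count lam (Suc j) = i}"
    using add_replicate_mset_bounded_partitions[OF rest, of "i div Suc j"] by (simp add: lam)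
qed

definition fps_exp_monom :: "'a::field_char_0 \<Rightarrow> nat \<Rightarrow> 'a fps" where
  "fps_exp_monom c p = Abs_fps (\<lambda>i. if p dvd i then c ^ (i div p) / fact (i div p) else 0)"

lemma sum_partition_weight_count_slice:
  assumes "i \<le> m"
  shows "(\<Sum>lam | lam \<in> bounded_partitions (Suc j) m \<and> Suc j * count lam (Suc j) = i. partition_weight z lam) =
         fps_nth (fps_exp_monom (- z (Suc j) / of_nat (Suc j)) (Suc j)) i * partition_sum z j (m - i)"
    (is "sum _ (?slice i) = fps_nth (fps_exp_monom ?c _) i * _")
proof (cases "Suc j dvd i")
  case True
  let ?u = "i div Suc j"
  have "inj_on (\<lambda>lam. replicate_mset ?u (Suc j) + lam) (bounded_partitions j (m - i))"
    by (simp add: inj_on_def)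
  then have "(\<Sum>lam\<in>?slice i. partition_weight z lam) =
             (\<Sum>lam\<in>bounded_partitions j (m - i). partition_weight z (replicate_mset ?u (Suc j) + lam))"
    unfolding bounded_partitions_Suc_count_slice[OF assms True] by (simp only: sum.reindex comp_def)
  also have "\<dots> = (\<Sum>lam\<in>bounded_partitions j (m - i). ?c ^ ?u / fact ?u * partition_weight z lam)"
    by (intro sum.cong refl partition_weight_add_replicate) (auto simp: bounded_partitions_def)
  also have "\<dots> = fps_nth (fps_exp_monom ?c (Suc j)) i * partition_sum z j (m - i)"
    using True by (simp add: fps_exp_monom_def partition_sum_def sum_distrib_left)
  finally show ?thesis .
next
  case False
  moreover have "Suc j dvd Suc j * count lam (Suc j)" for lam
    by (rule dvd_triv_left)
  ultimately have "?slice i = {}"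
    by blast
  with False show ?thesis
    by (simp only:) (simp add: fps_exp_monom_def)
qed

lemma fps_partition_sum_Suc:
  "Abs_fps (partition_sum z (Suc j)) =
   fps_exp_monom (- z (Suc j) / of_nat (Suc j)) (Suc j) * Abs_fps (partition_sum z j)"
proof (rule fps_ext)
  fix m
  let ?c = "- z (Suc j) / of_nat (Suc j)"
  let ?slice = "\<lambda>i. {lam \<in> bounded_partitions (Suc j) m. Suc j * count lam (Suc j) = i}"
  have "Suc j * count lam (Suc j) \<le> m" if "lam \<in> bounded_partitions (Suc j) m" for lam
    using that sum_mset_split_count[of lam "Suc j"] by (simp add: bounded_partitions_def)
  then have "(\<lambda>lam. Suc j * count lam (Suc j)) ` bounded_partitions (Suc j) m \<subseteq> {0..m}"
    by auto
  then have "partition_sum z (Suc j) m = (\<Sum>i=0..m. \<Sum>lam\<in>?slice i. partition_weight z lam)"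
    unfolding partition_sum_def
    by (rule sum.group[OF finite_bounded_partitions finite_atLeastAtMost, symmetric])
  also have "\<dots> = (\<Sum>i=0..m. fps_nth (fps_exp_monom ?c (Suc j)) i * partition_sum z j (m - i))"
    by (intro sum.cong refl sum_partition_weight_count_slice) simp
  finally show "fps_nth (Abs_fps (partition_sum z (Suc j))) m =
                fps_nth (fps_exp_monom ?c (Suc j) * Abs_fps (partition_sum z j)) m"
    by (simp add: fps_mult_nth)
qed

lemma fps_X_deriv_nth: "fps_nth (fps_X * fps_deriv f) n = of_nat n * fps_nth f n"
  by (cases n) simp_all

lemma fps_exp_monom_euler:
  assumes "0 < p"
  shows "fps_X * fps_deriv (fps_exp_monom c p) =
         fps_const (of_nat p * c) * (fps_X ^ p * fps_exp_monom c p)"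
proof (rule fps_ext)
  fix i
  show "fps_nth (fps_X * fps_deriv (fps_exp_monom c p)) i =
        fps_nth (fps_const (of_nat p * c) * (fps_X ^ p * fps_exp_monom c p)) i"
  proof (cases "p dvd i")
    case True
    then obtain u where i: "i = p * u"
      by blast
    show ?thesis
    proof (cases u)
      case 0
      with i assms show ?thesis
        by (simp add: fps_X_deriv_nth fps_X_power_mult_nth)
    next
      case (Suc v)
      with i assms have "\<not> i < p" and "i - p = p * v"
        by (auto simp: algebra_simps)
      with i Suc assms show ?thesis
        by (simp add: fps_X_deriv_nth fps_X_power_mult_nth fps_exp_monom_def field_simps
            del: of_nat_Suc) (simp add: algebra_simps)
    qed
  next
    case False
    have "\<not> p dvd i - p" if "p \<le> i"
    proof
      assume "p dvd i - p"
      then have "p dvd i - p + p"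
        by simp
      with that False show False
        by simp
    qed
    with False show ?thesis
      by (auto simp: fps_X_deriv_nth fps_X_power_mult_nth fps_exp_monom_def)
  qed
qed

lemma fps_partition_sum_0: "Abs_fps (partition_sum z 0) = 1"
proof (rule fps_ext)
  fix m
  have "bounded_partitions 0 m = (if m = 0 then {{#}} else {})"
    by (auto simp: bounded_partitions_def)
  then show "fps_nth (Abs_fps (partition_sum z 0)) m = fps_nth 1 m"
    by (simp add: partition_sum_def partition_weight_def)
qed

lemma fps_partition_sum_euler:
  "fps_X * fps_deriv (Abs_fps (partition_sum z j)) =
   - (Abs_fps (\<lambda>k. if k \<in> {1..j} then z k else 0) * Abs_fps (partition_sum z j))"
proof (induction j)
  case 0
  have "Abs_fps (\<lambda>k. if k \<in> {1..0} then z k else 0) = 0"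
    by (simp add: fps_eq_iff)
  then show ?case
    by (simp add: fps_partition_sum_0)
next
  case (Suc j)
  let ?E = "fps_exp_monom (- z (Suc j) / of_nat (Suc j)) (Suc j)"
  let ?F = "Abs_fps (partition_sum z j)"
  have c: "fps_const (of_nat (Suc j) * (- z (Suc j) / of_nat (Suc j))) = - fps_const (z (Suc j))"
    by (simp del: of_nat_Suc)
  have E: "fps_X * fps_deriv ?E = - (fps_const (z (Suc j)) * (fps_X ^ Suc j * ?E))"
    unfolding fps_exp_monom_euler[OF zero_less_Suc] c by (simp only: mult_minus_left)
  have S: "Abs_fps (\<lambda>k. if k \<in> {1..Suc j} then z k else 0) =
           Abs_fps (\<lambda>k. if k \<in> {1..j} then z k else 0) + fps_const (z (Suc j)) * fps_X ^ Suc j"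
    by (rule fps_ext) (auto simp: fps_X_power_nth)
  have "fps_X * fps_deriv (?E * ?F) = ?E * (fps_X * fps_deriv ?F) + (fps_X * fps_deriv ?E) * ?F"
    by (simp add: algebra_simps)
  also have "\<dots> = - (Abs_fps (\<lambda>k. if k \<in> {1..Suc j} then z k else 0) * (?E * ?F))"
    unfolding Suc.IH E S by (simp add: algebra_simps)
  finally show ?case
    by (simp only: fps_partition_sum_Suc)
qed

lemma fps_linear_times_geometric:
  fixes a :: "'a::comm_ring_1"
  shows "(1 - fps_const a * fps_X) * Abs_fps (\<lambda>k. if k = 0 then 0 else a ^ k) = fps_const a * fps_X"
proof (rule fps_ext)
  fix n
  let ?A = "Abs_fps (\<lambda>k. if k = 0 then 0 else a ^ k)"
  have "(1 - fps_const a * fps_X) * ?A = ?A - fps_const a * (fps_X * ?A)"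
    by (simp only: left_diff_distrib mult_1 mult.assoc)
  then show "fps_nth ((1 - fps_const a * fps_X) * ?A) n = fps_nth (fps_const a * fps_X) n"
    by (cases n) auto
qed

lemma fps_prod_linear_euler:
  fixes x :: "'b \<Rightarrow> 'a::comm_ring_1"
  assumes "finite I"
  shows "fps_X * fps_deriv (\<Prod>i\<in>I. 1 - fps_const (x i) * fps_X) =
         - (Abs_fps (\<lambda>k. if k = 0 then 0 else \<Sum>i\<in>I. x i ^ k) * (\<Prod>i\<in>I. 1 - fps_const (x i) * fps_X))"
  using assms
proof (induction I rule: finite_induct)
  case empty
  have "Abs_fps (\<lambda>k. if k = 0 then 0 else \<Sum>i\<in>{}. x i ^ k) = (0 :: 'a fps)"
    by (simp add: fps_eq_iff)
  then show ?case
    by simp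
next
  case (insert i I)
  let ?L = "1 - fps_const (x i) * fps_X"
  let ?A = "Abs_fps (\<lambda>k. if k = 0 then 0 else x i ^ k)"
  let ?P = "\<lambda>I. Abs_fps (\<lambda>k. if k = 0 then 0 else \<Sum>i\<in>I. x i ^ k)"
  let ?G = "\<Prod>i\<in>I. 1 - fps_const (x i) * fps_X"
  have P: "?P (insert i I) = ?A + ?P I"
    using insert by (simp add: fps_eq_iff)
  have "fps_X * fps_deriv (?L * ?G) = ?L * (fps_X * fps_deriv ?G) - fps_const (x i) * fps_X * ?G"
    by (simp add: algebra_simps)
  also have "\<dots> = - (?L * ?A) * ?G - ?P I * (?L * ?G)"
    unfolding insert.IH fps_linear_times_geometric by (simp add: algebra_simps)
  also have "\<dots> = - ((?A + ?P I) * (?L * ?G))"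
    by (simp add: algebra_simps)
  finally show ?case
    by (simp only: P prod.insert[OF insert.hyps])
qed

lemma euler_equation_nth_Suc:
  fixes H W :: "'a::field_char_0 fps"
  assumes "fps_X * fps_deriv H = - (W * H)" and "fps_nth H 0 = 1"
  shows "fps_nth W (Suc n) =
         - (of_nat (Suc n) * fps_nth H (Suc n)) - (\<Sum>i=0..n. fps_nth W i * fps_nth H (Suc n - i))"
proof -
  have "of_nat (Suc n) * fps_nth H (Suc n) = fps_nth (- (W * H)) (Suc n)"
    unfolding assms(1)[symmetric] fps_X_deriv_nth ..
  also have "\<dots> = - (fps_nth W (Suc n) + (\<Sum>i=0..n. fps_nth W i * fps_nth H (Suc n - i)))"
    using assms(2) by (simp add: fps_mult_nth sum.atLeast0_atMost_Suc add.commute)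
  finally have H: "of_nat (Suc n) * fps_nth H (Suc n) =
                   - (fps_nth W (Suc n) + (\<Sum>i=0..n. fps_nth W i * fps_nth H (Suc n - i)))" .
  show ?thesis
    unfolding H by simp
qed

(* Once the lower coefficients agree, euler_equation_nth_Suc makes U_(n+1) and F_(n+1)
   determine each other. *)
lemma euler_equation_coeffs_agree_iff:
  fixes F G U V :: "'a::field_char_0 fps"
  assumes F: "fps_X * fps_deriv F = - (U * F)" and G: "fps_X * fps_deriv G = - (V * G)"
    and F0: "fps_nth F 0 = 1" and G0: "fps_nth G 0 = 1"
    and U0: "fps_nth U 0 = 0" and V0: "fps_nth V 0 = 0"
  shows "(\<forall>k\<in>{1..n}. fps_nth U k = fps_nth V k) \<longleftrightarrow> (\<forall>m\<le>n. fps_nth F m = fps_nth G m)"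
proof (induction n)
  case 0
  then show ?case
    using F0 G0 by simp
next
  case (Suc n)
  show ?case
  proof (cases "\<forall>m\<le>n. fps_nth F m = fps_nth G m")
    case True
    with Suc.IH have UV: "\<forall>k\<in>{1..n}. fps_nth U k = fps_nth V k"
      by simp
    have "(\<Sum>i=0..n. fps_nth U i * fps_nth F (Suc n - i)) = (\<Sum>i=0..n. fps_nth V i * fps_nth G (Suc n - i))"
    proof (rule sum.cong[OF refl])
      fix i assume "i \<in> {0..n}"
      with True UV U0 V0 show "fps_nth U i * fps_nth F (Suc n - i) = fps_nth V i * fps_nth G (Suc n - i)"
        by (cases "i = 0") auto
    qed
    then have "fps_nth U (Suc n) = fps_nth V (Suc n) \<longleftrightarrow> fps_nth F (Suc n) = fps_nth G (Suc n)"
      unfolding euler_equation_nth_Suc[OF F F0] euler_equation_nth_Suc[OF G G0] by (simp del: of_nat_Suc)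
    with True UV show ?thesis
      by (auto simp: le_Suc_eq)
  next
    case False
    with Suc.IH show ?thesis
      by auto
  qed
qed

lemma power_sums_eq_iff_partition_sums:
  fixes x :: "'b \<Rightarrow> 'a::field_char_0"
  assumes "finite I"
  shows "(\<forall>k\<in>{1..n}. (\<Sum>i\<in>I. x i ^ k) = z k) \<longleftrightarrow>
         (\<forall>m\<le>n. fps_nth (\<Prod>i\<in>I. 1 - fps_const (x i) * fps_X) m = partition_sum z n m)"
proof -
  have "fps_nth (\<Prod>i\<in>I. 1 - fps_const (x i) * fps_X) 0 = 1"
    by (induction I rule: infinite_finite_induct) auto
  moreover have "(\<forall>k\<in>{1..n}. (\<Sum>i\<in>I. x i ^ k) = (if k \<in> {1..n} then z k else 0)) \<longleftrightarrow>
                 (\<forall>k\<in>{1..n}. (\<Sum>i\<in>I. x i ^ k) = z k)"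
    by auto
  ultimately show ?thesis
    using euler_equation_coeffs_agree_iff[OF fps_prod_linear_euler[OF assms, of x]
        fps_partition_sum_euler[of z n], of n]
    by (simp add: partition_sum_at_0)
qed

lemma Q_eq_partition_sum:
  assumes "m \<le> j"
  shows "Q m z = fact m * partition_sum z j m"
proof (cases "m = 0")
  case False
  have "xi m lam * (\<Prod>p\<in>set_mset lam. z p ^ count lam p) = fact m * partition_weight z lam"
    if "lam \<in> partitions m" for lam
  proof -
    have "(-1) ^ count lam p / (fact (count lam p) * of_nat p ^ count lam p) * z p ^ count lam p =
          (- z p / of_nat p) ^ count lam p / fact (count lam p)" if "p \<in># lam" for p
    proof -
      have "p \<noteq> 0"
        using \<open>lam \<in> partitions m\<close> that by (auto simp: partitions_def)
      then show ?thesis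
        by (simp add: power_minus[of "z p / of_nat p"] power_divide field_simps)
    qed
    then show ?thesis
      unfolding xi_def partition_weight_def by (simp add: prod.distrib[symmetric] mult.assoc)
  qed
  with False show ?thesis
    by (simp add: Q_def partition_sum_def bounded_partitions_eq_partitions[OF assms] sum_distrib_left)
qed (simp add: Q_def partition_sum_at_0)

lemma coeff_Ppoly: "coeff (Ppoly n z) k = (if k \<le> n then fact n * partition_sum z n (n - k) else 0)"
proof -
  have "coeff (Ppoly n z) k = (\<Sum>m=0..n. if n - m = k then fact n / fact m * Q m z else 0)"
    by (simp only: Ppoly_def coeff_sum coeff_monom)
  also have "\<dots> = (\<Sum>m=0..n. if m = n - k \<and> k \<le> n then fact n / fact m * Q m z else 0)"
    by (intro sum.cong) auto
  also have "\<dots> = (if k \<le> n then fact n * partition_sum z n (n - k) else 0)"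
    by (simp add: Q_eq_partition_sum[of "n - k" n])
  finally show ?thesis .
qed

lemma lead_coeff_Ppoly: "lead_coeff (Ppoly n z) = fact n"
proof -
  have "degree (Ppoly n z) = n"
    by (intro antisym degree_le le_degree) (simp_all add: coeff_Ppoly partition_sum_at_0)
  then show ?thesis
    by (simp add: coeff_Ppoly partition_sum_at_0)
qed

lemma reflect_poly_linear:
  fixes a :: "'a::comm_ring_1"
  shows "reflect_poly [:- a, 1:] = [:1, - a:]"
  by (rule poly_eqI) (simp add: coeff_reflect_poly coeff_pCons split: nat.split)

lemma coeff_prod_linear_factors:
  fixes x :: "'b \<Rightarrow> 'a::field"
  assumes "finite I"
  shows "coeff (\<Prod>i\<in>I. [:- x i, 1:]) k =
         (if k \<le> card I then fps_nth (\<Prod>i\<in>I. 1 - fps_const (x i) * fps_X) (card I - k) else 0)"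
proof -
  have degree: "degree (\<Prod>i\<in>I. [:- x i, 1:]) = card I"
    using assms by (simp add: degree_prod_eq_sum_degree)
  have "fps_of_poly [:1, - x i:] = 1 - fps_const (x i) * fps_X" for i
    by (simp add: fps_of_poly_linear')
  then have "(\<Prod>i\<in>I. 1 - fps_const (x i) * fps_X) = fps_of_poly (reflect_poly (\<Prod>i\<in>I. [:- x i, 1:]))"
    by (simp only: reflect_poly_prod reflect_poly_linear fps_of_poly_prod)
  with degree show ?thesis
    by (simp add: coeff_reflect_poly coeff_eq_0)
qed

lemma Ppoly_eq_smult_prod_iff:
  "Ppoly n z = Polynomial.smult (fact n) (\<Prod>i\<in>{1..n}. [:- x i, 1:]) \<longleftrightarrow>
   (\<forall>m\<le>n. fps_nth (\<Prod>i\<in>{1..n}. 1 - fps_const (x i) * fps_X) m = partition_sum z n m)"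
    (is "_ \<longleftrightarrow> (\<forall>m\<le>n. ?agree m)")
proof -
  have "coeff (Ppoly n z) k = coeff (Polynomial.smult (fact n) (\<Prod>i\<in>{1..n}. [:- x i, 1:])) k \<longleftrightarrow>
        (k \<le> n \<longrightarrow> ?agree (n - k))" for k
    by (auto simp: coeff_Ppoly coeff_prod_linear_factors)
  then have "Ppoly n z = Polynomial.smult (fact n) (\<Prod>i\<in>{1..n}. [:- x i, 1:]) \<longleftrightarrow>
             (\<forall>k\<le>n. ?agree (n - k))"
    unfolding poly_eq_iff by simp
  also have "\<dots> \<longleftrightarrow> (\<forall>m\<le>n. ?agree m)"
  proof (intro iffI allI impI)
    fix m assume agree: "\<forall>k\<le>n. ?agree (n - k)" and "m \<le> n"
    then show "?agree m"
      using agree[rule_format, of "n - m"] by simp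
  qed simp
  finally show ?thesis .
qed

lemma complex_poly_eq_smult_linear_factors_iff:
  fixes p :: "complex poly"
  assumes "p \<noteq> 0"
  shows "p = Polynomial.smult (lead_coeff p) (\<Prod>a\<in>#A. [:- a, 1:]) \<longleftrightarrow> (\<forall>a. count A a = order a p)"
proof
  assume "p = Polynomial.smult (lead_coeff p) (\<Prod>a\<in>#A. [:- a, 1:])"
  then have "proots p = proots (\<Prod>a\<in>#A. [:- a, 1:])"
    using assms by (metis proots_smult leading_coeff_0_iff)
  also have "\<dots> = A"
  proof -
    have "0 \<notin># image_mset (\<lambda>a. [:- a, 1:]) A"
      by auto
    from proots_prod_mset[OF this] show ?thesis
      by (simp add: image_mset.compositionality comp_def)
  qed
  finally show "\<forall>a. count A a = order a p"
    using assms by auto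
next
  assume "\<forall>a. count A a = order a p"
  with assms have "proots p = A"
    by (simp add: multiset_eq_iff)
  then show "p = Polynomial.smult (lead_coeff p) (\<Prod>a\<in>#A. [:- a, 1:])"
    using complex_poly_decompose_multiset[of p] by simp
qed

lemma amplitudes_match_iff_roots:
  assumes "n \<ge> 1" and "d 0 \<noteq> 0" and y: "y ^ n = d 0 / of_nat n"
  defines "z \<equiv> \<lambda>k. d k / (y ^ (n - k) * complex_of_real (sqrt (real (n choose k))))"
  shows "(\<forall>is\<in>basis_strings n. dicke_sup n d is = mps_amp n y x is) \<longleftrightarrow>
         Ppoly n z \<noteq> 0 \<and> (\<forall>a. count (image_mset x (mset_set {1..n})) a = order a (Ppoly n z))"
proof -
  let ?roots = "image_mset x (mset_set {1..n})"
  have "Ppoly n z \<noteq> 0"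
    using lead_coeff_Ppoly[of n z] by auto
  have roots: "(\<Prod>i\<in>{1..n}. [:- x i, 1:]) = (\<Prod>a\<in>#?roots. [:- a, 1:])"
    by (simp add: prod_unfold_prod_mset image_mset.compositionality comp_def)
  have "(\<forall>is\<in>basis_strings n. dicke_sup n d is = mps_amp n y x is) \<longleftrightarrow>
        (\<forall>k\<in>{1..n}. (\<Sum>l=1..n. x l ^ k) = z k)"
    using amplitudes_match_iff_power_sums[of n d, OF assms(1,2)] y by (simp add: z_def)
  also have "\<dots> \<longleftrightarrow> (\<forall>m\<le>n. fps_nth (\<Prod>i\<in>{1..n}. 1 - fps_const (x i) * fps_X) m = partition_sum z n m)"
    by (rule power_sums_eq_iff_partition_sums) simp
  also have "\<dots> \<longleftrightarrow> Ppoly n z = Polynomial.smult (lead_coeff (Ppoly n z)) (\<Prod>a\<in>#?roots. [:- a, 1:])"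
    by (simp only: lead_coeff_Ppoly roots[symmetric] Ppoly_eq_smult_prod_iff)
  also have "\<dots> \<longleftrightarrow> Ppoly n z \<noteq> 0 \<and> (\<forall>a. count ?roots a = order a (Ppoly n z))"
    using complex_poly_eq_smult_linear_factors_iff[OF \<open>Ppoly n z \<noteq> 0\<close>] \<open>Ppoly n z \<noteq> 0\<close> by simp
  finally show ?thesis .
qed

theorem lemma3:
  fixes n :: nat and d :: "nat \<Rightarrow> complex"
  assumes "n \<ge> 1" and "d 0 \<noteq> 0"
  shows "(\<forall>(y::complex) (x::nat \<Rightarrow> complex).
            (\<forall>is\<in>basis_strings n. dicke_sup n d is = mps_amp n y x is)
            \<longleftrightarrow> (y ^ n = d 0 / of_nat n \<and>
                 (\<forall>k\<in>{1..n}. (\<Sum>l=1..n. x l ^ k) =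
                     d k / (y ^ (n - k) * complex_of_real (sqrt (real (n choose k)))))))
       \<and> (\<forall>y::complex. y ^ n = d 0 / of_nat n \<longrightarrow>
            (\<forall>x::nat \<Rightarrow> complex.
               (\<forall>is\<in>basis_strings n. dicke_sup n d is = mps_amp n y x is)
               \<longleftrightarrow> (let z = (\<lambda>k. d k / (y ^ (n - k) * complex_of_real (sqrt (real (n choose k)))))
                    in Ppoly n z \<noteq> 0 \<and>
                       (\<forall>a. count (image_mset x (mset_set {1..n})) a = order a (Ppoly n z)))))"
  using amplitudes_match_iff_power_sums[of n d, OF assms] amplitudes_match_iff_roots[of n d, OF assms]
  by (simp add: Let_def)

end
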